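(* Let $k\ge 1$, let $G=K_2\vee\overline{K_k}$, and let $v$ be a vertex of maximum degree in $G$. If $p\ge\max\{3,\Delta(G)\}$, then $G$ is $f_{p,v}$-edge-orientable.
   Context: $G_1\vee G_2$ denotes the join: the disjoint union of $G_1$ and $G_2$ plus all edges between them. $\overline{K_k}$ is the edgeless graph on $k$ vertices. An orientation of a graph $H$ is any digraph obtained by replacing each edge $uv$ with the arc $(u,v)$, with the arc $(v,u)$, or with both arcs. A kernel of a digraph $D$ is an independent set $S$ such that every vertex of $D-S$ has an out-neighbor in $S$. $D$ is kernel-perfect if every induced subdigraph of $D$ has a kernel. For $f:V(H)\to\mathbb{N}$, an orientation $D$ of $H$ is $f$-kernel-perfect if it is kernel-perfect and $f(v)\ge 1+d^+_D(v)$ for all $v$. For $f:E(G)\to\mathbb{N}$, $G$ is $f$-edge-orientable if its line graph $L(G)$ admits an $f$-kernel-perfect orientation. For $v\in V(G)$, define $f_{p,v}:E(G)\to\mathbb{N}$ by $f_{p,v}(e)=d_G(v)$ if $e$ is incident to $v$, and $f_{p,v}(e)=p$ otherwise. *)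

theory Defs
  imports Main
begin

text \<open>Simple graphs are given by a vertex set and a set of edges (2-element vertex sets).\<close>

definition degree :: "'a set set \<Rightarrow> 'a \<Rightarrow> nat" where
  "degree E v = card {e \<in> E. v \<in> e}"

definition max_degree :: "'a set \<Rightarrow> 'a set set \<Rightarrow> nat" where
  "max_degree V E = Max (degree E ` V)"

text \<open>An orientation of the undirected graph
  with vertex set V and symmetric adjacency adj: every arc joins adjacent vertices and every
  edge receives at least one of its two arcs (possibly both).\<close>

definition orientation :: "'b set \<Rightarrow> ('b \<Rightarrow> 'b \<Rightarrow> bool) \<Rightarrow> ('b \<times> 'b) set \<Rightarrow> bool" where
  "orientation V adj D \<longleftrightarrow>
     D \<subseteq> {(u, w). u \<in> V \<and> w \<in> V \<and> adj u w} \<and>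
     (\<forall>u\<in>V. \<forall>w\<in>V. adj u w \<longrightarrow> (u, w) \<in> D \<or> (w, u) \<in> D)"

definition is_kernel :: "('b \<times> 'b) set \<Rightarrow> 'b set \<Rightarrow> 'b set \<Rightarrow> bool" where
  "is_kernel D W S \<longleftrightarrow> S \<subseteq> W \<and> (\<forall>x\<in>S. \<forall>y\<in>S. (x, y) \<notin> D) \<and>
     (\<forall>x\<in>W - S. \<exists>y\<in>S. (x, y) \<in> D)"

definition kernel_perfect :: "'b set \<Rightarrow> ('b \<times> 'b) set \<Rightarrow> bool" where
  "kernel_perfect V D \<longleftrightarrow> (\<forall>W\<subseteq>V. \<exists>S. is_kernel D W S)"

definition outdeg :: "('b \<times> 'b) set \<Rightarrow> 'b \<Rightarrow> nat" where
  "outdeg D v = card {w. (v, w) \<in> D}"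

definition f_kernel_perfect_orientation ::
  "'b set \<Rightarrow> ('b \<Rightarrow> 'b \<Rightarrow> bool) \<Rightarrow> ('b \<Rightarrow> nat) \<Rightarrow> ('b \<times> 'b) set \<Rightarrow> bool" where
  "f_kernel_perfect_orientation V adj f D \<longleftrightarrow>
     orientation V adj D \<and> kernel_perfect V D \<and> (\<forall>v\<in>V. f v \<ge> 1 + outdeg D v)"

definition line_adj :: "'a set \<Rightarrow> 'a set \<Rightarrow> bool" where
  "line_adj e e' \<longleftrightarrow> e \<noteq> e' \<and> e \<inter> e' \<noteq> {}"

definition f_edge_orientable :: "'a set set \<Rightarrow> ('a set \<Rightarrow> nat) \<Rightarrow> bool" where
  "f_edge_orientable E f \<longleftrightarrow> (\<exists>D. f_kernel_perfect_orientation E line_adj f D)"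

definition f_pv :: "'a set set \<Rightarrow> nat \<Rightarrow> 'a \<Rightarrow> 'a set \<Rightarrow> nat" where
  "f_pv E p v e = (if v \<in> e then degree E v else p)"

text \<open>The join K_2 \<or> complement(K_k): vertices 0,1 form the K_2, vertices 2..k+1 the
  independent set.\<close>
definition joinV :: "nat \<Rightarrow> nat set" where
  "joinV k = {0..k+1}"

definition joinE :: "nat \<Rightarrow> nat set set" where
  "joinE k = {{0, 1}} \<union> {{i, j} | i j. i \<in> {0, 1} \<and> j \<in> {2..k+1}}"

end

theory Submission
  imports Defs
begin

text \<open>
  Write \<open>e\<^sub>0 = {0,1}\<close>, \<open>a\<^sub>j = {0,j}\<close> and \<open>b\<^sub>j = {1,j}\<close> for \<open>2 \<le> j \<le> k+1\<close>.
  For \<open>k = 1\<close> the line graph is a triangle, which is oriented transitively with the edge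
  avoiding \<open>v\<close> (where \<open>f = p \<ge> 3\<close>) as its source. For \<open>k \<ge> 2\<close> every edge has
  \<open>f \<ge> \<Delta> = k+1\<close>, so it suffices to orient the line graph kernel-perfectly with all
  out-degrees at most \<open>k\<close>: make \<open>e\<^sub>0\<close> a sink, let the \<open>a\<^sub>j\<close> point to smaller and the
  \<open>b\<^sub>j\<close> to larger indices, and join the two sides by \<open>a\<^sub>2 \<rightarrow> b\<^sub>2\<close> and \<open>b\<^sub>j \<rightarrow> a\<^sub>j\<close>
  for \<open>j \<ge> 3\<close>. An induced subdigraph containing \<open>e\<^sub>0\<close> has the kernel \<open>{e\<^sub>0}\<close>; otherwise
  its lowest \<open>a\<^sub>i\<close> and highest \<open>b\<^sub>j\<close> form a kernel, up to a small adjustment when these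
  two indices coincide.
\<close>

lemma is_kernel_insert_sink:
  assumes "x \<in> W" and "\<forall>y\<in>W. (x, y) \<notin> D"
    and "is_kernel D (W - {x} - {y. (y, x) \<in> D}) S"
  shows "is_kernel D W (insert x S)"
  using assms unfolding is_kernel_def by blast

lemma kernel_perfect_by_rank:
  fixes r :: "'b \<Rightarrow> nat"
  assumes "finite V" and "\<forall>x\<in>V. \<forall>y\<in>V. (x, y) \<in> D \<longrightarrow> r y < r x"
  shows "kernel_perfect V D"
  unfolding kernel_perfect_def
proof (intro allI impI)
  fix W assume "W \<subseteq> V"
  then show "\<exists>S. is_kernel D W S"
  proof (induction "card W" arbitrary: W rule: less_induct)
    case less
    show ?case
    proof (cases "W = {}")
      case True
      then show ?thesis by (auto simp: is_kernel_def)
    next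
      case False
      have "finite W" using less.prems assms(1) finite_subset by blast
      then obtain x where x: "x \<in> W" "\<forall>y\<in>W. r x \<le> r y"
        using arg_min_if_finite[OF \<open>finite W\<close> False, of r] by (meson not_le)
      then have sink: "\<forall>y\<in>W. (x, y) \<notin> D"
        using assms(2) less.prems by (meson in_mono leD)
      let ?W' = "W - {x} - {y. (y, x) \<in> D}"
      have "card ?W' < card W"
        using \<open>finite W\<close> x(1) by (intro psubset_card_mono) auto
      then obtain S where "is_kernel D ?W' S"
        using less.hyps less.prems by (meson Diff_subset subset_trans)
      then show ?thesis using is_kernel_insert_sink[OF x(1) sink] by blast
    qed
  qed
qed

lemma triangle_kernel_perfect_orientation:
  assumes "card V = 3" and adj: "\<forall>u\<in>V. \<forall>w\<in>V. adj u w \<longleftrightarrow> u \<noteq> w"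
    and "a \<in> V" and "f a \<ge> 3" and "\<forall>e\<in>V. f e \<ge> 2"
  shows "\<exists>D. f_kernel_perfect_orientation V adj f D"
proof -
  have "card (V - {a}) = 2" using assms(1,3) by simp
  then obtain b c where "V - {a} = {b, c}" "b \<noteq> c"
    by (auto simp: card_2_iff)
  then have V: "V = {a, b, c}" and bc: "b \<noteq> c" "a \<noteq> b" "a \<noteq> c"
    using insert_Diff[OF \<open>a \<in> V\<close>] by auto
  define D where "D = {(a, b), (a, c), (b, c)}"
  define r where "r e = (if e = a then 2 else if e = b then 1 else 0 :: nat)" for e
  have "orientation V adj D"
    using adj bc unfolding orientation_def D_def V by auto
  moreover have "kernel_perfect V D"
    by (rule kernel_perfect_by_rank[where r = r]) (use bc in \<open>auto simp: V D_def r_def\<close>)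
  moreover have "{w. (a, w) \<in> D} = {b, c}" "{w. (b, w) \<in> D} = {c}" "{w. (c, w) \<in> D} = {}"
    using bc unfolding D_def by auto
  then have "\<forall>e\<in>V. f e \<ge> 1 + outdeg D e"
    using assms(4,5) bc unfolding outdeg_def V by auto
  ultimately show ?thesis unfolding f_kernel_perfect_orientation_def by blast
qed

lemma finite_min_subsingleton:
  fixes X :: "'a::linorder set"
  assumes "finite X"
  obtains S where "S \<subseteq> X" "\<forall>s\<in>S. \<forall>s'\<in>S. s = s'" "\<forall>x\<in>X - S. \<exists>s\<in>S. s < x"
proof
  let ?S = "if X = {} then {} else {Min X}"
  show "?S \<subseteq> X" "\<forall>s\<in>?S. \<forall>s'\<in>?S. s = s'"
    using assms by auto
  show "\<forall>x\<in>X - ?S. \<exists>s\<in>?S. s < x"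
    using assms by (auto simp: order.strict_iff_order)
qed

lemma finite_max_subsingleton:
  fixes X :: "'a::linorder set"
  assumes "finite X"
  obtains S where "S \<subseteq> X" "\<forall>s\<in>S. \<forall>s'\<in>S. s = s'" "\<forall>x\<in>X - S. \<exists>s\<in>S. x < s"
proof
  let ?S = "if X = {} then {} else {Max X}"
  show "?S \<subseteq> X" "\<forall>s\<in>?S. \<forall>s'\<in>?S. s = s'"
    using assms by auto
  show "\<forall>x\<in>X - ?S. \<exists>s\<in>?S. x < s"
    using assms by (auto simp: order.strict_iff_order)
qed

lemma card_insert_image_Un_le:
  assumes "finite A" and "finite X"
  shows "card (insert x (f ` A \<union> X)) \<le> card A + card X + 1"
proof -
  have "card (insert x (f ` A \<union> X)) \<le> card (f ` A \<union> X) + 1"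
    using assms by (simp add: card_insert_if)
  also have "\<dots> \<le> card (f ` A) + card X + 1"
    using card_Un_le by simp
  also have "\<dots> \<le> card A + card X + 1"
    using card_image_le[OF assms(1)] by simp
  finally show ?thesis .
qed

lemma line_adj_doubleton: "b \<noteq> c \<Longrightarrow> line_adj {a, b} {a, c}"
  unfolding line_adj_def by (auto simp: doubleton_eq_iff)

lemma mem_joinE_iff:
  "e \<in> joinE k \<longleftrightarrow> e = {0, 1} \<or> (\<exists>j. 2 \<le> j \<and> j \<le> k+1 \<and> (e = {0, j} \<or> e = {1, j}))"
  unfolding joinE_def by auto

lemma joinE_eq:
  "joinE k = insert {0, 1} ((\<lambda>j. {0, j}) ` {2..k+1} \<union> (\<lambda>j. {1, j}) ` {2..k+1})"
  by (auto simp: mem_joinE_iff)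

lemma finite_joinE: "finite (joinE k)"
  by (simp add: joinE_eq)

lemma center_mem_joinE: "{0, 1} \<in> joinE k"
  by (simp add: mem_joinE_iff)

lemma spokes_mem_joinE: "2 \<le> j \<Longrightarrow> j \<le> k+1 \<Longrightarrow> {0, j} \<in> joinE k \<and> {1, j} \<in> joinE k"
  by (auto simp: mem_joinE_iff)

lemma max_degree_join_ge: "max_degree (joinV k) (joinE k) \<ge> k + 1"
proof -
  have "inj_on (\<lambda>j. {0::nat, j}) {1..k+1}"
    by (rule inj_onI) (simp add: doubleton_eq_iff)
  then have "k + 1 = card ((\<lambda>j. {0::nat, j}) ` {1..k+1})"
    by (simp add: card_image)
  also have "\<dots> \<le> card {e \<in> joinE k. 0 \<in> e}"
  proof (rule card_mono)
    show "finite {e \<in> joinE k. 0 \<in> e}" by (simp add: finite_joinE)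
    show "(\<lambda>j. {0, j}) ` {1..k+1} \<subseteq> {e \<in> joinE k. 0 \<in> e}"
    proof (rule image_subsetI)
      fix j assume "j \<in> {1..k+1}"
      then consider "j = 1" | "2 \<le> j" "j \<le> k+1" by fastforce
      then show "{0, j} \<in> {e \<in> joinE k. 0 \<in> e}"
        using center_mem_joinE spokes_mem_joinE by cases auto
    qed
  qed
  also have "\<dots> \<le> max_degree (joinV k) (joinE k)"
    unfolding max_degree_def joinV_def degree_def[symmetric] by (rule Max_ge) simp_all
  finally show ?thesis .
qed

lemma joinE_one: "joinE 1 = {{0, 1}, {0, 2}, {1, 2}}"
  by (simp add: joinE_eq numeral_2_eq_2 insert_commute)

definition join_orientation :: "nat \<Rightarrow> (nat set \<times> nat set) set" where
  "join_orientation k =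
     {(e, {0, 1}) | e. e \<in> joinE k \<and> e \<noteq> {0, 1}}
   \<union> {({0, i}, {0, j}) | i j. 2 \<le> j \<and> j < i \<and> i \<le> k+1}
   \<union> {({1, i}, {1, j}) | i j. 2 \<le> i \<and> i < j \<and> j \<le> k+1}
   \<union> {({1, j}, {0, j}) | j. 3 \<le> j \<and> j \<le> k+1}
   \<union> {({0, 2}, {1, 2})}"

lemma join_orientation_cases:
  assumes "(u, w) \<in> join_orientation k"
  obtains (center) "w = {0, 1}" "u \<in> joinE k" "u \<noteq> {0, 1}"
      | (aa) i j where "u = {0, i}" "w = {0, j}" "2 \<le> j" "j < i" "i \<le> k+1"
      | (bb) i j where "u = {1, i}" "w = {1, j}" "2 \<le> i" "i < j" "j \<le> k+1"
      | (ba) j where "u = {1, j}" "w = {0, j}" "3 \<le> j" "j \<le> k+1"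
      | (ab) "u = {0, 2}" "w = {1, 2}"
  using assms unfolding join_orientation_def
  by (elim UnE CollectE insertE emptyE exE conjE) (simp_all add: prod_eq_iff)

context
  fixes k i j :: nat
  assumes ij: "2 \<le> i" "2 \<le> j"
begin

lemma join_orientation_aa: "({0, i}, {0, j}) \<in> join_orientation k \<longleftrightarrow> j < i \<and> i \<le> k+1"
  using ij unfolding join_orientation_def by (auto simp: doubleton_eq_iff)

lemma join_orientation_bb: "({1, i}, {1, j}) \<in> join_orientation k \<longleftrightarrow> i < j \<and> j \<le> k+1"
  using ij unfolding join_orientation_def by (auto simp: doubleton_eq_iff)

lemma join_orientation_ab: "({0, i}, {1, j}) \<in> join_orientation k \<longleftrightarrow> i = 2 \<and> j = 2"
  using ij unfolding join_orientation_def by (auto simp: doubleton_eq_iff)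

lemma join_orientation_ba: "({1, i}, {0, j}) \<in> join_orientation k \<longleftrightarrow> i = j \<and> 3 \<le> j \<and> j \<le> k+1"
  using ij unfolding join_orientation_def by (auto simp: doubleton_eq_iff)

end

lemma join_orientation_to_center: "(e, {0, 1}) \<in> join_orientation k \<longleftrightarrow> e \<in> joinE k \<and> e \<noteq> {0, 1}"
  unfolding join_orientation_def by (auto simp: doubleton_eq_iff)

lemma join_orientation_from_center: "({0, 1}, e) \<notin> join_orientation k"
  unfolding join_orientation_def by (auto simp: doubleton_eq_iff)

lemma join_orientation_irrefl: "(e, e) \<notin> join_orientation k"
  unfolding join_orientation_def by (auto simp: doubleton_eq_iff)

(* In Suc 0 form: the simplifier rewrites 1::nat to Suc 0 (One_nat_def) before these could match. *)
lemmas join_orientation_spoke_arcs =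
  join_orientation_aa join_orientation_bb[unfolded One_nat_def]
  join_orientation_ab[unfolded One_nat_def] join_orientation_ba[unfolded One_nat_def]

lemma join_orientation_orientation:
  assumes "k \<ge> 1"
  shows "orientation (joinE k) line_adj (join_orientation k)"
  unfolding orientation_def
proof (intro conjI ballI impI)
  have "u \<in> joinE k \<and> w \<in> joinE k \<and> line_adj u w" if "(u, w) \<in> join_orientation k" for u w
    using that
  proof (cases rule: join_orientation_cases)
    case center
    then obtain j where "2 \<le> j" "u = {0, j} \<or> u = {1, j}"
      by (auto simp: mem_joinE_iff)
    then have "line_adj u {0, 1}"
      using line_adj_doubleton[of j 1 0] line_adj_doubleton[of j 0 1] by (auto simp: insert_commute)
    then show ?thesis using center center_mem_joinE by simp
  next
    case (aa i j)
    then show ?thesis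
      using spokes_mem_joinE[of i k] spokes_mem_joinE[of j k] line_adj_doubleton[of i j 0] by simp
  next
    case (bb i j)
    then show ?thesis
      using spokes_mem_joinE[of i k] spokes_mem_joinE[of j k] line_adj_doubleton[of i j 1] by simp
  next
    case (ba j)
    then show ?thesis
      using spokes_mem_joinE[of j k] line_adj_doubleton[of 1 0 j] by (simp add: insert_commute)
  next
    case ab
    then show ?thesis
      using assms spokes_mem_joinE[of 2 k] line_adj_doubleton[of 0 1 "2::nat"] by (simp add: insert_commute)
  qed
  then show "join_orientation k \<subseteq> {(u, w). u \<in> joinE k \<and> w \<in> joinE k \<and> line_adj u w}"
    by auto
next
  fix u w assume u: "u \<in> joinE k" and w: "w \<in> joinE k" and "line_adj u w"
  then have "u \<noteq> w" "u \<inter> w \<noteq> {}" unfolding line_adj_def by auto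
  show "(u, w) \<in> join_orientation k \<or> (w, u) \<in> join_orientation k"
  proof (cases "u = {0, 1} \<or> w = {0, 1}")
    case True
    then show ?thesis using u w \<open>u \<noteq> w\<close> join_orientation_to_center by blast
  next
    case False
    then obtain i j where "i \<in> {2..k+1}" "j \<in> {2..k+1}"
      and "u = {0, i} \<or> u = {1, i}" and "w = {0, j} \<or> w = {1, j}"
      using u w by (auto simp: mem_joinE_iff)
    moreover have "{0, i} \<inter> {1, j} \<noteq> {} \<longleftrightarrow> i = j" "{1, i} \<inter> {0, j} \<noteq> {} \<longleftrightarrow> i = j"
      using \<open>i \<in> {2..k+1}\<close> \<open>j \<in> {2..k+1}\<close> by auto
    ultimately show ?thesis
      using \<open>u \<noteq> w\<close> \<open>u \<inter> w \<noteq> {}\<close>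
      by (elim disjE) (auto simp: join_orientation_spoke_arcs)
  qed
qed

lemma join_orientation_out_a:
  assumes "2 \<le> j"
  shows "{w. ({0, j}, w) \<in> join_orientation k} \<subseteq>
           insert {0, 1} ((\<lambda>i. {0, i}) ` {2..<j} \<union> (if j = 2 then {{1, 2}} else {}))"
  using assms unfolding join_orientation_def by (auto simp: doubleton_eq_iff)

lemma join_orientation_out_b:
  assumes "2 \<le> j"
  shows "{w. ({1, j}, w) \<in> join_orientation k} \<subseteq>
           insert {0, 1} ((\<lambda>i. {1, i}) ` {j<..k+1} \<union> (if j = 2 then {} else {{0, j}}))"
  using assms unfolding join_orientation_def by (auto simp: doubleton_eq_iff)

lemma join_orientation_outdeg_le:
  assumes "k \<ge> 2" and "e \<in> joinE k"
  shows "outdeg (join_orientation k) e \<le> k"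
proof -
  have outdeg_le: "outdeg (join_orientation k) e \<le> card T"
    if "{w. (e, w) \<in> join_orientation k} \<subseteq> T" "finite T" for T
    unfolding outdeg_def using card_mono[OF that(2,1)] .
  consider (center) "e = {0, 1}" | (spoke) j where "2 \<le> j" "j \<le> k+1" "e = {0, j} \<or> e = {1, j}"
    using assms(2) by (auto simp: mem_joinE_iff)
  then show ?thesis
  proof cases
    case center
    then have "{w. (e, w) \<in> join_orientation k} = {}"
      using join_orientation_from_center by blast
    then show ?thesis unfolding outdeg_def by simp
  next
    case spoke
    from spoke(3) show ?thesis
    proof
      assume "e = {0, j}"
      then have "outdeg (join_orientation k) e
          \<le> card (insert {0, 1} ((\<lambda>i. {0, i}) ` {2..<j} \<union> (if j = 2 then {{1, 2::nat}} else {})))"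
        using join_orientation_out_a[OF spoke(1)] by (intro outdeg_le) auto
      also have "\<dots> \<le> card {2..<j} + card (if j = 2 then {{1, 2::nat}} else {}) + 1"
        by (rule card_insert_image_Un_le) auto
      finally show ?thesis using assms(1) spoke by (auto split: if_splits)
    next
      assume "e = {1, j}"
      then have "outdeg (join_orientation k) e
          \<le> card (insert {0, 1} ((\<lambda>i. {1, i}) ` {j<..k+1} \<union> (if j = 2 then {} else {{0, j}})))"
        using join_orientation_out_b[OF spoke(1)] by (intro outdeg_le) auto
      also have "\<dots> \<le> card {j<..k+1} + card (if j = 2 then {} else {{0::nat, j}}) + 1"
        by (rule card_insert_image_Un_le) auto
      finally show ?thesis using spoke by (auto split: if_splits)
    qed
  qed
qed

lemma join_orientation_kernel_of_indices:
  assumes A: "A \<subseteq> {2..k+1}" and B: "B \<subseteq> {2..k+1}"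
    and sub: "SA \<subseteq> A" "SB \<subseteq> B" and disj: "SA \<inter> SB = {}"
    and single: "\<forall>i\<in>SA. \<forall>i'\<in>SA. i = i'" "\<forall>j\<in>SB. \<forall>j'\<in>SB. j = j'"
    and absorb_A: "\<forall>i\<in>A - SA. (\<exists>i'\<in>SA. i' < i) \<or> (i = 2 \<and> 2 \<in> SB)"
    and absorb_B: "\<forall>j\<in>B - SB. (\<exists>j'\<in>SB. j < j') \<or> (3 \<le> j \<and> j \<in> SA)"
  shows "is_kernel (join_orientation k) ((\<lambda>i. {0, i}) ` A \<union> (\<lambda>j. {1, j}) ` B)
           ((\<lambda>i. {0, i}) ` SA \<union> (\<lambda>j. {1, j}) ` SB)"
    (is "is_kernel ?D ?W ?S")
  unfolding is_kernel_def
proof (intro conjI)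
  have ge2: "2 \<le> i" if "i \<in> A \<union> B" for i
    using that A B by auto
  show "?S \<subseteq> ?W"
    using sub by blast
  have "({0, i}, {0, i'}) \<notin> ?D" if "i \<in> SA" "i' \<in> SA" for i i'
    using that single(1) join_orientation_irrefl by metis
  moreover have "({1, j}, {1, j'}) \<notin> ?D" if "j \<in> SB" "j' \<in> SB" for j j'
    using that single(2) join_orientation_irrefl by metis
  moreover have "({0, i}, {1, j}) \<notin> ?D \<and> ({1, j}, {0, i}) \<notin> ?D" if "i \<in> SA" "j \<in> SB" for i j
  proof -
    have "i \<noteq> j" "2 \<le> i" "2 \<le> j"
      using that disj sub ge2 by auto
    then show ?thesis by (simp add: join_orientation_spoke_arcs)
  qed
  ultimately show "\<forall>x\<in>?S. \<forall>y\<in>?S. (x, y) \<notin> ?D"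
    by blast
  have "\<exists>y\<in>?S. ({0, i}, y) \<in> ?D" if i: "i \<in> A - SA" for i
  proof -
    have "2 \<le> i" "i \<le> k+1" using i A by auto
    from i absorb_A consider (lower) i' where "i' \<in> SA" "i' < i" | (via_b2) "i = 2" "2 \<in> SB"
      by blast
    then show ?thesis
    proof cases
      case lower
      then have "({0, i}, {0, i'}) \<in> ?D"
        using \<open>2 \<le> i\<close> \<open>i \<le> k+1\<close> sub A by (subst join_orientation_aa) auto
      then show ?thesis using lower by blast
    next
      case via_b2
      then have "({0, i}, {1, 2}) \<in> ?D" by (subst join_orientation_ab) auto
      then show ?thesis using via_b2 by blast
    qed
  qed
  moreover have "\<exists>y\<in>?S. ({1, j}, y) \<in> ?D" if j: "j \<in> B - SB" for j
  proof -
    have "2 \<le> j" "j \<le> k+1" using j B by auto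
    from j absorb_B consider (higher) j' where "j' \<in> SB" "j < j'" | (via_a) "3 \<le> j" "j \<in> SA"
      by blast
    then show ?thesis
    proof cases
      case higher
      then have "({1, j}, {1, j'}) \<in> ?D"
        using \<open>2 \<le> j\<close> sub B by (subst join_orientation_bb) auto
      then show ?thesis using higher by blast
    next
      case via_a
      then have "({1, j}, {0, j}) \<in> ?D"
        using \<open>j \<le> k+1\<close> by (subst join_orientation_ba) auto
      then show ?thesis using via_a by blast
    qed
  qed
  ultimately show "\<forall>x\<in>?W - ?S. \<exists>y\<in>?S. (x, y) \<in> ?D"
    by blast
qed

lemma join_orientation_kernel_of_spokes:
  assumes A: "A \<subseteq> {2..k+1}" and B: "B \<subseteq> {2..k+1}"
  shows "\<exists>S. is_kernel (join_orientation k) ((\<lambda>i. {0, i}) ` A \<union> (\<lambda>j. {1, j}) ` B) S"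
proof -
  have fin: "finite A" "finite B"
    using A B finite_subset by blast+
  (* The lowest a-spoke together with the highest b-spoke of another index is a kernel, unless
     b_2 is the only b-spoke and a_2 is present: then b_2 has no out-neighbour left, so it
     enters the kernel and absorbs a_2. *)
  show ?thesis
  proof (cases "2 \<in> A \<and> B = {2}")
    case True
    obtain SA where SA: "SA \<subseteq> A - {2}" "\<forall>s\<in>SA. \<forall>s'\<in>SA. s = s'"
      "\<forall>i\<in>A - {2} - SA. \<exists>s\<in>SA. s < i"
      using finite_min_subsingleton[of "A - {2}"] fin by blast
    have "is_kernel (join_orientation k) ((\<lambda>i. {0, i}) ` A \<union> (\<lambda>j. {1, j}) ` B)
            ((\<lambda>i. {0, i}) ` SA \<union> (\<lambda>j. {1, j}) ` {2})"
      using True SA by (intro join_orientation_kernel_of_indices[OF A B]) blast+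
    then show ?thesis by blast
  next
    case False
    obtain SA where SA: "SA \<subseteq> A" "\<forall>s\<in>SA. \<forall>s'\<in>SA. s = s'" "\<forall>i\<in>A - SA. \<exists>s\<in>SA. s < i"
      using finite_min_subsingleton fin(1) by blast
    obtain SB where SB: "SB \<subseteq> B - SA" "\<forall>s\<in>SB. \<forall>s'\<in>SB. s = s'"
      "\<forall>j\<in>B - SA - SB. \<exists>s\<in>SB. j < s"
      using finite_max_subsingleton[of "B - SA"] fin(2) by blast
    have "(\<exists>j'\<in>SB. j < j') \<or> (3 \<le> j \<and> j \<in> SA)" if j: "j \<in> B - SB" for j
    proof (cases "j \<in> SA \<and> j = 2")
      case True
      then have "SA = {2}" using SA(2) by blast
      moreover obtain j' where "j' \<in> B" "j' \<noteq> 2"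
        using False True j SA(1) by blast
      moreover have "2 < j'"
        using subsetD[OF B \<open>j' \<in> B\<close>] \<open>j' \<noteq> 2\<close> by simp
      ultimately have "\<exists>s\<in>SB. 2 < s"
      proof (cases "j' \<in> SB")
        case False
        then obtain t where "t \<in> SB" "j' < t"
          using SB(3) \<open>SA = {2}\<close> \<open>j' \<in> B\<close> \<open>j' \<noteq> 2\<close> by blast
        then show ?thesis using \<open>2 < j'\<close> by (meson order.strict_trans)
      qed auto
      then show ?thesis using True by blast
    next
      case False
      then show ?thesis using j SB(3) B by fastforce
    qed
    then have "is_kernel (join_orientation k) ((\<lambda>i. {0, i}) ` A \<union> (\<lambda>j. {1, j}) ` B)
            ((\<lambda>i. {0, i}) ` SA \<union> (\<lambda>j. {1, j}) ` SB)"
      using SA SB by (intro join_orientation_kernel_of_indices[OF A B]) blast+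
    then show ?thesis by blast
  qed
qed

lemma join_orientation_kernel_perfect: "kernel_perfect (joinE k) (join_orientation k)"
  unfolding kernel_perfect_def
proof (intro allI impI)
  fix W assume W: "W \<subseteq> joinE k"
  show "\<exists>S. is_kernel (join_orientation k) W S"
  proof (cases "{0, 1} \<in> W")
    case True
    have "is_kernel (join_orientation k) W {{0, 1}}"
      using True W join_orientation_to_center join_orientation_irrefl unfolding is_kernel_def by blast
    then show ?thesis ..
  next
    case False
    define A where "A = {i \<in> {2..k+1}. {0, i} \<in> W}"
    define B where "B = {j \<in> {2..k+1}. {1, j} \<in> W}"
    have "W \<subseteq> (\<lambda>i. {0, i}) ` A \<union> (\<lambda>j. {1, j}) ` B"
    proof
      fix e assume "e \<in> W"
      with W False have "e \<in> joinE k" "e \<noteq> {0, 1}" by auto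
      then obtain j where "2 \<le> j" "j \<le> k+1" "e = {0, j} \<or> e = {1, j}"
        by (auto simp: mem_joinE_iff)
      then show "e \<in> (\<lambda>i. {0, i}) ` A \<union> (\<lambda>j. {1, j}) ` B"
        using \<open>e \<in> W\<close> unfolding A_def B_def by auto
    qed
    then have "W = (\<lambda>i. {0, i}) ` A \<union> (\<lambda>j. {1, j}) ` B"
      unfolding A_def B_def by blast
    moreover have "A \<subseteq> {2..k+1}" "B \<subseteq> {2..k+1}"
      unfolding A_def B_def by auto
    ultimately show ?thesis
      using join_orientation_kernel_of_spokes by metis
  qed
qed

lemma join_f_edge_orientable:
  assumes "k \<ge> 2" and "\<forall>e\<in>joinE k. f e \<ge> k + 1"
  shows "f_edge_orientable (joinE k) f"
proof -
  have "f_kernel_perfect_orientation (joinE k) line_adj f (join_orientation k)"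
    unfolding f_kernel_perfect_orientation_def
    using assms join_orientation_orientation join_orientation_kernel_perfect
      join_orientation_outdeg_le by fastforce
  then show ?thesis unfolding f_edge_orientable_def by blast
qed

lemma join_one_f_edge_orientable:
  assumes "a \<in> joinE 1" and "f a \<ge> 3" and "\<forall>e\<in>joinE 1. f e \<ge> 2"
  shows "f_edge_orientable (joinE 1) f"
proof -
  have "card (joinE 1) = 3"
    unfolding joinE_one by (simp add: doubleton_eq_iff)
  moreover have "\<forall>u\<in>joinE 1. \<forall>w\<in>joinE 1. line_adj u w \<longleftrightarrow> u \<noteq> w"
    unfolding joinE_one line_adj_def by auto
  ultimately show ?thesis
    unfolding f_edge_orientable_def by (rule triangle_kernel_perfect_orientation[OF _ _ assms])
qed

theorem mainTheorem16:
  fixes k p v :: nat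
  assumes "k \<ge> 1"
    and "v \<in> joinV k"
    and "degree (joinE k) v = max_degree (joinV k) (joinE k)"
    and "p \<ge> max 3 (max_degree (joinV k) (joinE k))"
  shows "f_edge_orientable (joinE k) (f_pv (joinE k) p v)"
proof -
  have f_ge: "f_pv (joinE k) p v e \<ge> k + 1" for e
    using assms(3,4) max_degree_join_ge[of k] unfolding f_pv_def by simp
  show ?thesis
  proof (cases "k \<ge> 2")
    case True
    then show ?thesis using join_f_edge_orientable f_ge by blast
  next
    case False
    then have k: "k = 1" using assms(1) by simp
    then have "v \<in> {0, 1, 2}"
      using assms(2) by (auto simp: joinV_def)
    then have "\<exists>a\<in>joinE 1. v \<notin> a"
      unfolding joinE_one by auto
    then obtain a where a: "a \<in> joinE 1" "v \<notin> a" ..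
    have "f_pv (joinE 1) p v a \<ge> 3"
      using a(2) assms(4) unfolding f_pv_def by simp
    moreover have "\<forall>e\<in>joinE 1. f_pv (joinE 1) p v e \<ge> 2"
      using f_ge unfolding k one_add_one by blast
    ultimately show ?thesis
      unfolding k using join_one_f_edge_orientable[OF a(1)] by blast
  qed
qed

end
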